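(* Let $\|\cdot\|$ be a norm on $\mathbb{R}^d$ and $T:\mathbb{R}^d\to\mathbb{R}^d$ nonexpansive for it with $\operatorname{Fix}T\neq\emptyset$. Let $\tilde T:\mathbb{R}^d\times\Xi\to\mathbb{R}^d$ be a stochastic oracle with $\mathbb{E}(\tilde T(x,\xi))=Tx$ for $\xi\sim\mathcal{D}_x$, and with uniformly bounded variance: $\sup_{x}\mathbb{E}(\|\tilde T(x,\xi)-Tx\|_2^2)\le\sigma^2$. Consider the stochastic Halpern method: given $x^0$, for $n=1,\dots,N$, draw $k_n$ independent samples $\xi_{n,1},\dots,\xi_{n,k_n}\sim\mathcal{D}_{x^{n-1}}$ and set $x^n=(1-\beta_n)x^0+\beta_n\frac{1}{k_n}\sum_{j=1}^{k_n}\tilde T(x^{n-1},\xi_{n,j})$, with $\beta_n=\frac{n}{n+1}$. Then, given $\varepsilon>0$, this method with $k_n=n^4$ returns a point $x^N$ with $\mathbb{E}(\|x^N-Tx^N\|)\le\varepsilon$ using at most $\tilde O(\varepsilon^{-5})$ queries to the stochastic oracle $\tilde T$.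
   Context: $\|\cdot\|_2$ is the Euclidean norm. $\tilde O$ denotes big-$O$ ignoring logarithmic factors. The number of queries is the total number $\sum_{n=1}^N k_n$ of evaluations of $\tilde T$. The stepsize $\beta_n=n/(n+1)$ is the one used throughout the paper's explicit results. *)

theory Defs
  imports "HOL-Probability.Probability"
begin

definition is_norm :: "('a::real_vector \<Rightarrow> real) \<Rightarrow> bool" where
  "is_norm N \<longleftrightarrow>
     (\<forall>x. N x \<ge> 0) \<and> (\<forall>x. N x = 0 \<longleftrightarrow> x = 0) \<and>
     (\<forall>c x. N (c *\<^sub>R x) = \<bar>c\<bar> * N x) \<and> (\<forall>x y. N (x + y) \<le> N x + N y)"

text \<open>Law of the iterate x^n of the stochastic Halpern method with stepsize
  beta_n = n/(n+1) and batch sizes k_n: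
  x^n = (1 - beta_n) x^0 + beta_n (1/k_n) sum_{j=1}^{k_n} Tt(x^{n-1}, xi_{n,j}),
  where, given x^{n-1}, the xi_{n,j} are i.i.d. with law D(x^{n-1}).\<close>
fun halpern_law ::
  "('a::euclidean_space \<Rightarrow> 'b measure) \<Rightarrow> ('a \<Rightarrow> 'b \<Rightarrow> 'a) \<Rightarrow> (nat \<Rightarrow> nat) \<Rightarrow> 'a \<Rightarrow> nat \<Rightarrow> 'a measure"
where
  "halpern_law D Tt k x0 0 = return borel x0"
| "halpern_law D Tt k x0 (Suc n) =
     bind (halpern_law D Tt k x0 n)
       (\<lambda>x. distr (PiM {..<k (Suc n)} (\<lambda>_. D x)) borel
              (\<lambda>\<xi>. (1 - real (Suc n) / real (Suc n + 1)) *\<^sub>R x0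
                   + (real (Suc n) / real (Suc n + 1)) *\<^sub>R
                       ((1 / real (k (Suc n))) *\<^sub>R (\<Sum>j<k (Suc n). Tt x (\<xi> j)))))"

end

theory Submission
  imports Defs "HOL-Analysis.Harmonic_Numbers"
begin

text \<open>
  The stochastic iterates \<open>x\<^sup>n\<close> are compared with the deterministic Halpern iterates
  \<open>z\<^sup>n = (1 - \<beta>\<^sub>n) x\<^sup>0 + \<beta>\<^sub>n T z\<^sup>n\<^sup>-\<^sup>1\<close>. A mean of \<open>k\<close> independent oracle answers
  has mean square error at most \<open>\<sigma>\<^sup>2 / k\<close>, so by nonexpansiveness one step gives
  \<open>(n + 1) E \<parallel>x\<^sup>n - z\<^sup>n\<parallel> \<le> n E \<parallel>x\<^sup>n\<^sup>-\<^sup>1 - z\<^sup>n\<^sup>-\<^sup>1\<parallel> + c \<sigma> n / sqrt k\<^sub>n\<close>; with \<open>k\<^sub>n = n\<^sup>4\<close> this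
  error is \<open>O(H\<^sub>n / n)\<close>. The deterministic iterates have residual
  \<open>\<parallel>z\<^sup>n - T z\<^sup>n\<parallel> = O(H\<^sub>n / n)\<close>, obtained by telescoping \<open>(n + 2) \<parallel>z\<^sup>n\<^sup>+\<^sup>1 - z\<^sup>n\<parallel>\<close>.
  Hence \<open>E \<parallel>x\<^sup>N - T x\<^sup>N\<parallel> = O(log N / N)\<close>, so \<open>N = O(\<epsilon>\<^sup>-\<^sup>1 log \<epsilon>\<^sup>-\<^sup>1)\<close> iterations
  suffice, and they use \<open>\<Sum>n\<le>N. n\<^sup>4 \<le> N\<^sup>5\<close> oracle calls.
\<close>

section \<open>Norms on euclidean spaces\<close>

lemma is_norm_nonneg: "is_norm N \<Longrightarrow> 0 \<le> N x"
  and is_norm_eq_0_iff: "is_norm N \<Longrightarrow> N x = 0 \<longleftrightarrow> x = 0"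
  and is_norm_scaleR: "is_norm N \<Longrightarrow> N (c *\<^sub>R x) = \<bar>c\<bar> * N x"
  and is_norm_triangle: "is_norm N \<Longrightarrow> N (x + y) \<le> N x + N y"
  unfolding is_norm_def by blast+

lemma is_norm_minus_commute:
  assumes "is_norm N" shows "N (x - y) = N (y - x)"
  using is_norm_scaleR[OF assms, of "-1" "x - y"] by simp

lemma is_norm_triangle_diff:
  assumes "is_norm N" shows "N (x - y) \<le> N (x - z) + N (z - y)"
  using is_norm_triangle[OF assms, of "x - z" "z - y"] by simp

lemma is_norm_sum:
  assumes "is_norm N" shows "N (\<Sum>i\<in>S. f i) \<le> (\<Sum>i\<in>S. N (f i))"
proof (induction S rule: infinite_finite_induct)
  case (insert i S)
  then show ?case using is_norm_triangle[OF assms, of "f i" "sum f S"] by simp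
qed (use is_norm_eq_0_iff[OF assms, of 0] in simp_all)

lemma is_norm_le_norm:
  fixes N :: "'a::euclidean_space \<Rightarrow> real"
  assumes "is_norm N"
  shows "N v \<le> (\<Sum>b\<in>Basis. N b) * norm v"
proof -
  have "N v = N (\<Sum>b\<in>Basis. (v \<bullet> b) *\<^sub>R b)" by (simp add: euclidean_representation)
  also have "\<dots> \<le> (\<Sum>b\<in>Basis. N ((v \<bullet> b) *\<^sub>R b))" by (rule is_norm_sum[OF assms])
  also have "\<dots> = (\<Sum>b\<in>Basis. \<bar>v \<bullet> b\<bar> * N b)" by (simp add: is_norm_scaleR[OF assms])
  also have "\<dots> \<le> (\<Sum>b\<in>Basis. norm v * N b)"
    by (intro sum_mono mult_right_mono Basis_le_norm is_norm_nonneg[OF assms])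
  finally show ?thesis by (simp add: sum_distrib_left mult.commute)
qed

lemma is_norm_Basis_sum_pos:
  fixes N :: "'a::euclidean_space \<Rightarrow> real"
  assumes "is_norm N"
  shows "0 < (\<Sum>b\<in>Basis. N b)"
proof -
  obtain b :: 'a where "b \<in> Basis" using nonempty_Basis by blast
  then show ?thesis
    using is_norm_nonneg[OF assms] is_norm_eq_0_iff[OF assms] nonzero_Basis
    by (intro sum_pos2[of Basis b]) (auto simp: order_less_le)
qed

lemma borel_measurable_is_norm:
  fixes N :: "'a::euclidean_space \<Rightarrow> real"
  assumes "is_norm N"
  shows "N \<in> borel_measurable borel"
proof (rule borel_measurable_continuous_onI, rule lipschitz_on_continuous_on)
  show "(\<Sum>b\<in>Basis. N b)-lipschitz_on UNIV N"
  proof (rule lipschitz_onI)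
    fix x y :: 'a
    have "N x \<le> N y + N (x - y)" "N y \<le> N x + N (x - y)"
      using is_norm_triangle_diff[OF assms, of x 0 y] is_norm_triangle_diff[OF assms, of y 0 x]
        is_norm_minus_commute[OF assms, of y x] is_norm_minus_commute[OF assms, of 0]
      by (auto simp: add.commute)
    then show "dist (N x) (N y) \<le> (\<Sum>b\<in>Basis. N b) * dist x y"
      using is_norm_le_norm[OF assms, of "x - y"] by (simp add: dist_real_def dist_norm)
  qed (use is_norm_Basis_sum_pos[OF assms] in simp)
qed

section \<open>Independent samples\<close>

lemma measurable_PiM_prob_kernel:
  assumes D: "D \<in> M \<rightarrow>\<^sub>M prob_algebra \<Xi>" and I: "finite I"
  shows "(\<lambda>x. PiM I (\<lambda>_. D x)) \<in> M \<rightarrow>\<^sub>M prob_algebra (PiM I (\<lambda>_. \<Xi>))"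
proof (rule measurable_prob_algebra_generated[OF sets_PiM Int_stable_prod_algebra prod_algebra_sets_into_space])
  fix x assume "x \<in> space M"
  then have "prob_space (D x)" "sets (D x) = sets \<Xi>"
    using measurable_space[OF D] by (auto simp: space_prob_algebra)
  then show "prob_space (PiM I (\<lambda>_. D x))" "sets (PiM I (\<lambda>_. D x)) = sets (PiM I (\<lambda>_. \<Xi>))"
    by (auto intro!: prob_space_PiM sets_PiM_cong)
next
  fix A assume "A \<in> prod_algebra I (\<lambda>_. \<Xi>)"
  then obtain E where A: "A = Pi\<^sub>E I E" and E: "E \<in> (\<Pi> i\<in>I. sets \<Xi>)"
    by (rule prod_algebraE_all)
  have "emeasure (PiM I (\<lambda>_. D x)) A = (\<Prod>i\<in>I. emeasure (D x) (E i))" if "x \<in> space M" for x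
  proof -
    have "prob_space (D x)" "sets (D x) = sets \<Xi>"
      using measurable_space[OF D that] by (auto simp: space_prob_algebra)
    then interpret product_sigma_finite "\<lambda>_. D x"
      by (simp add: product_sigma_finite_def prob_space_imp_sigma_finite)
    show ?thesis unfolding A using E \<open>sets (D x) = sets \<Xi>\<close> I by (intro emeasure_PiM) auto
  qed
  moreover have "(\<lambda>x. \<Prod>i\<in>I. emeasure (D x) (E i)) \<in> borel_measurable M"
    using E measurable_compose[OF measurable_prob_algebraD[OF D] measurable_emeasure_subprob_algebra]
    by (intro borel_measurable_prod_ennreal) blast
  ultimately show "(\<lambda>x. emeasure (PiM I (\<lambda>_. D x)) A) \<in> borel_measurable M"
    by (subst measurable_cong) auto
qed

lemma integral_PiM_prod_subset:
  fixes f :: "'i \<Rightarrow> 'a \<Rightarrow> real"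
  assumes M: "prob_space M" and I: "finite I" "J \<subseteq> I"
    and f: "\<And>i. i \<in> J \<Longrightarrow> integrable M (f i)"
  shows "integrable (PiM I (\<lambda>_. M)) (\<lambda>\<omega>. \<Prod>i\<in>J. f i (\<omega> i))"
    and "(\<integral>\<omega>. (\<Prod>i\<in>J. f i (\<omega> i)) \<partial>PiM I (\<lambda>_. M)) = (\<Prod>i\<in>J. integral\<^sup>L M (f i))"
proof -
  interpret prob_space M by (rule M)
  interpret product_sigma_finite "\<lambda>_. M"
    by (simp add: product_sigma_finite_def prob_space_imp_sigma_finite M)
  define g where "g i = (if i \<in> J then f i else (\<lambda>_. 1))" for i
  have g: "integrable M (g i)" for i using f by (simp add: g_def)
  note g_prod = product_integrable_prod[OF I(1), of g] product_integral_prod[OF I(1), of g]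
  have "(\<Prod>i\<in>I. g i (\<omega> i)) = (\<Prod>i\<in>J. f i (\<omega> i))" for \<omega>
    using I by (intro prod.mono_neutral_cong_right) (auto simp: g_def)
  moreover have "(\<Prod>i\<in>I. integral\<^sup>L M (g i)) = (\<Prod>i\<in>J. integral\<^sup>L M (f i))"
    using I by (intro prod.mono_neutral_cong_right) (auto simp: g_def prob_space)
  ultimately show "integrable (PiM I (\<lambda>_. M)) (\<lambda>\<omega>. \<Prod>i\<in>J. f i (\<omega> i))"
    and "(\<integral>\<omega>. (\<Prod>i\<in>J. f i (\<omega> i)) \<partial>PiM I (\<lambda>_. M)) = (\<Prod>i\<in>J. integral\<^sup>L M (f i))"
    using g_prod g by simp_all
qed

lemma PiM_inner_centered:
  fixes Y :: "'b \<Rightarrow> 'a::euclidean_space"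
  assumes M: "prob_space M" and I: "finite I" "i \<in> I" "j \<in> I"
    and Y: "integrable M Y" "integral\<^sup>L M Y = 0" and Y2: "integrable M (\<lambda>\<xi>. (norm (Y \<xi>))\<^sup>2)"
  shows "integrable (PiM I (\<lambda>_. M)) (\<lambda>\<omega>. Y (\<omega> i) \<bullet> Y (\<omega> j))"
    and "(\<integral>\<omega>. Y (\<omega> i) \<bullet> Y (\<omega> j) \<partial>PiM I (\<lambda>_. M)) = (if i = j then \<integral>\<xi>. (norm (Y \<xi>))\<^sup>2 \<partial>M else 0)"
proof -
  let ?P = "PiM I (\<lambda>_. M)"
  have "integrable ?P (\<lambda>\<omega>. Y (\<omega> i) \<bullet> Y (\<omega> j))
    \<and> (\<integral>\<omega>. Y (\<omega> i) \<bullet> Y (\<omega> j) \<partial>?P) = (if i = j then \<integral>\<xi>. (norm (Y \<xi>))\<^sup>2 \<partial>M else 0)"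
  proof (cases "i = j")
    case True
    then have "(\<lambda>\<omega>. Y (\<omega> i) \<bullet> Y (\<omega> j)) = (\<lambda>\<omega>. \<Prod>l\<in>{i}. (norm (Y (\<omega> l)))\<^sup>2)"
      by (simp add: fun_eq_iff power2_norm_eq_inner)
    then show ?thesis
      using integral_PiM_prod_subset[OF M I(1), where J="{i}" and f="\<lambda>_ \<xi>. (norm (Y \<xi>))\<^sup>2"] Y2 I True
      by simp
  next
    case False
    \<comment> \<open>distinct samples are independent and centred, so each coordinate product has mean zero\<close>
    have "integrable ?P (\<lambda>\<omega>. (Y (\<omega> i) \<bullet> b) * (Y (\<omega> j) \<bullet> b))
      \<and> (\<integral>\<omega>. (Y (\<omega> i) \<bullet> b) * (Y (\<omega> j) \<bullet> b) \<partial>?P) = 0" for b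
      using integral_PiM_prod_subset[OF M I(1), where J="{i, j}" and f="\<lambda>_ \<xi>. Y \<xi> \<bullet> b"] Y I False
      by simp
    moreover have "(\<lambda>\<omega>. Y (\<omega> i) \<bullet> Y (\<omega> j)) = (\<lambda>\<omega>. \<Sum>b\<in>Basis. (Y (\<omega> i) \<bullet> b) * (Y (\<omega> j) \<bullet> b))"
      by (rule ext) (rule euclidean_inner)
    ultimately show ?thesis using False by (simp add: integral_sum)
  qed
  then show "integrable ?P (\<lambda>\<omega>. Y (\<omega> i) \<bullet> Y (\<omega> j))"
    and "(\<integral>\<omega>. Y (\<omega> i) \<bullet> Y (\<omega> j) \<partial>?P) = (if i = j then \<integral>\<xi>. (norm (Y \<xi>))\<^sup>2 \<partial>M else 0)"
    by simp_all
qed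

definition sample_mean :: "nat \<Rightarrow> ('b \<Rightarrow> 'a::real_vector) \<Rightarrow> (nat \<Rightarrow> 'b) \<Rightarrow> 'a" where
  "sample_mean k f \<xi> = (1 / real k) *\<^sub>R (\<Sum>j<k. f (\<xi> j))"

lemma sample_mean_sq_error:
  fixes f :: "'b \<Rightarrow> 'a::euclidean_space"
  assumes M: "prob_space M" and f: "integrable M f"
    and f2: "integrable M (\<lambda>\<xi>. (norm (f \<xi> - integral\<^sup>L M f))\<^sup>2)" and k: "0 < k"
  defines "m \<equiv> integral\<^sup>L M f" and "P \<equiv> PiM {..<k} (\<lambda>_. M)"
  shows "integrable P (\<lambda>\<omega>. (norm (sample_mean k f \<omega> - m))\<^sup>2)"
    and "(\<integral>\<omega>. (norm (sample_mean k f \<omega> - m))\<^sup>2 \<partial>P) = (\<integral>\<xi>. (norm (f \<xi> - m))\<^sup>2 \<partial>M) / real k"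
proof -
  interpret prob_space M by (rule M)
  define Y where "Y = (\<lambda>\<xi>. f \<xi> - m)"
  let ?V = "\<integral>\<xi>. (norm (Y \<xi>))\<^sup>2 \<partial>M"
  have "integrable M Y" "integral\<^sup>L M Y = 0" "integrable M (\<lambda>\<xi>. (norm (Y \<xi>))\<^sup>2)"
    using f f2 by (simp_all add: Y_def m_def prob_space)
  note cov = PiM_inner_centered[OF M finite_lessThan[of k] _ _ this, folded P_def]
  have sq: "(norm (sample_mean k f \<omega> - m))\<^sup>2 = (\<Sum>i<k. \<Sum>j<k. Y (\<omega> i) \<bullet> Y (\<omega> j)) / (real k)\<^sup>2" for \<omega>
  proof -
    have "sample_mean k f \<omega> - m = (1 / real k) *\<^sub>R (\<Sum>j<k. Y (\<omega> j))"
      using k by (simp add: sample_mean_def Y_def sum_subtractf scaleR_diff_right sum_constant_scaleR)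
    moreover have "(norm (\<Sum>j<k. Y (\<omega> j)))\<^sup>2 = (\<Sum>i<k. \<Sum>j<k. Y (\<omega> i) \<bullet> Y (\<omega> j))"
      unfolding power2_norm_eq_inner inner_sum_left inner_sum_right by (rule sum.swap)
    ultimately show ?thesis by (simp add: power_divide)
  qed
  have row: "integrable P (\<lambda>\<omega>. \<Sum>j<k. Y (\<omega> i) \<bullet> Y (\<omega> j))" if "i < k" for i
    using that by (intro Bochner_Integration.integrable_sum cov(1)) auto
  show "integrable P (\<lambda>\<omega>. (norm (sample_mean k f \<omega> - m))\<^sup>2)"
    unfolding sq by (intro integrable_divide Bochner_Integration.integrable_sum row) blast
  have "(\<integral>\<omega>. (\<Sum>j<k. Y (\<omega> i) \<bullet> Y (\<omega> j)) \<partial>P) = (\<Sum>j<k. if i = j then ?V else 0)" if "i < k" for i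
    using cov that by (simp add: Bochner_Integration.integral_sum)
  then have "(\<integral>\<omega>. (\<Sum>i<k. \<Sum>j<k. Y (\<omega> i) \<bullet> Y (\<omega> j)) \<partial>P) = real k * ?V"
    using row by (simp add: Bochner_Integration.integral_sum)
  then show "(\<integral>\<omega>. (norm (sample_mean k f \<omega> - m))\<^sup>2 \<partial>P) = (\<integral>\<xi>. (norm (f \<xi> - m))\<^sup>2 \<partial>M) / real k"
    unfolding sq using k by (simp add: Y_def power2_eq_square)
qed

lemma nn_integral_le_of_second_moment:
  fixes f :: "'a \<Rightarrow> real"
  assumes M: "prob_space M" and f2: "integrable M (\<lambda>x. (f x)\<^sup>2)"
    and le: "(\<integral>x. (f x)\<^sup>2 \<partial>M) \<le> a\<^sup>2" and a: "0 < a"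
  shows "(\<integral>\<^sup>+x. ennreal \<bar>f x\<bar> \<partial>M) \<le> ennreal a"
proof -
  interpret prob_space M by (rule M)
  \<comment> \<open>AM-GM, \<open>\<bar>t\<bar> \<le> (t\<^sup>2 / a + a) / 2\<close>, avoids Jensen's inequality for the square root\<close>
  have "\<bar>f x\<bar> \<le> ((f x)\<^sup>2 / a + a) / 2" for x
    using a sum_squares_ge_zero[of "\<bar>f x\<bar> - a" 0]
    by (simp add: field_simps power2_eq_square)
  then have "(\<integral>\<^sup>+x. ennreal \<bar>f x\<bar> \<partial>M) \<le> (\<integral>\<^sup>+x. ennreal (((f x)\<^sup>2 / a + a) / 2) \<partial>M)"
    by (intro nn_integral_mono ennreal_leI)
  also have "\<dots> = ennreal (((\<integral>x. (f x)\<^sup>2 \<partial>M) / a + a) / 2)"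
    using f2 a by (subst nn_integral_eq_integral) (auto simp: prob_space)
  also have "\<dots> \<le> ennreal a"
    using le a by (intro ennreal_leI) (simp add: field_simps power2_eq_square)
  finally show ?thesis .
qed

lemma nn_integral_affine_le:
  assumes M: "prob_space M" and f: "f \<in> borel_measurable M" "\<And>x. 0 \<le> f x"
    and le: "(\<integral>\<^sup>+x. ennreal (f x) \<partial>M) \<le> ennreal e"
    and "0 \<le> a" "0 \<le> b" "0 \<le> e"
  shows "(\<integral>\<^sup>+x. ennreal (a * f x + b) \<partial>M) \<le> ennreal (a * e + b)"
proof -
  interpret prob_space M by (rule M)
  have "(\<integral>\<^sup>+x. ennreal (a * f x + b) \<partial>M) = (\<integral>\<^sup>+x. ennreal a * ennreal (f x) + ennreal b \<partial>M)"
    using assms by (intro nn_integral_cong) (simp add: ennreal_mult ennreal_plus)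
  also have "\<dots> = ennreal a * (\<integral>\<^sup>+x. ennreal (f x) \<partial>M) + ennreal b"
    using f by (simp add: nn_integral_add nn_integral_cmult emeasure_space_1)
  also have "\<dots> \<le> ennreal a * ennreal e + ennreal b"
    using le by (intro add_right_mono mult_left_mono) auto
  also have "\<dots> = ennreal (a * e + b)"
    using assms by (simp add: ennreal_mult ennreal_plus)
  finally show ?thesis .
qed

section \<open>The deterministic Halpern iteration\<close>

definition halpern_update :: "'a::real_vector \<Rightarrow> nat \<Rightarrow> 'a \<Rightarrow> 'a" where
  "halpern_update x0 n y = (1 - real n / real (n + 1)) *\<^sub>R x0 + (real n / real (n + 1)) *\<^sub>R y"

fun halpern_seq :: "('a::real_vector \<Rightarrow> 'a) \<Rightarrow> 'a \<Rightarrow> nat \<Rightarrow> 'a" where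
  "halpern_seq T x0 0 = x0"
| "halpern_seq T x0 (Suc n) = halpern_update x0 (Suc n) (T (halpern_seq T x0 n))"

lemma one_minus_halpern_coeff: "1 - real n / real (n + 1) = 1 / real (n + 1)"
  by (simp add: field_simps)

lemma halpern_update_fixed: "halpern_update p n p = p"
  by (simp add: halpern_update_def scaleR_diff_left)

lemma halpern_update_0: "halpern_update x0 0 y = x0"
  by (simp add: halpern_update_def)

lemma halpern_update_diff:
  "halpern_update x0 n y - halpern_update x0' n y'
     = (1 / real (n + 1)) *\<^sub>R (x0 - x0') + (real n / real (n + 1)) *\<^sub>R (y - y')"
  unfolding halpern_update_def one_minus_halpern_coeff by (simp add: algebra_simps)

lemma halpern_update_Suc_diff:
  "halpern_update x0 (Suc m) y - halpern_update x0 m y'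
     = (real (Suc m) / real (m + 2)) *\<^sub>R (y - y') + (1 / (real (m + 1) * real (m + 2))) *\<^sub>R (y' - x0)"
proof -
  have "real (Suc m) / real (m + 2) - real m / real (m + 1) = 1 / (real (m + 1) * real (m + 2))"
    by (simp add: field_simps)
  then show ?thesis
    by (simp add: halpern_update_def algebra_simps)
qed

lemma halpern_update_minus:
  "halpern_update x0 n y - y' = (1 / real (n + 1)) *\<^sub>R (x0 - y) + (y - y')"
proof -
  have "halpern_update x0 n y - y' = (1 - real n / real (n + 1)) *\<^sub>R (x0 - y) + (y - y')"
    by (simp add: halpern_update_def algebra_simps)
  then show ?thesis unfolding one_minus_halpern_coeff .
qed

locale nonexpansive_map =
  fixes Nrm :: "'a::euclidean_space \<Rightarrow> real" and T :: "'a \<Rightarrow> 'a"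
  assumes is_norm: "is_norm Nrm"
    and nonexpansive: "\<And>x y. Nrm (T x - T y) \<le> Nrm (x - y)"
begin

lemmas Nrm_nonneg = is_norm_nonneg[OF is_norm]
  and Nrm_scaleR = is_norm_scaleR[OF is_norm]
  and Nrm_triangle = is_norm_triangle[OF is_norm]
  and Nrm_minus_commute = is_norm_minus_commute[OF is_norm]
  and Nrm_triangle_diff = is_norm_triangle_diff[OF is_norm]

lemma norm_scaleR_add_le:
  assumes "0 \<le> a" "0 \<le> b"
  shows "Nrm (a *\<^sub>R u + b *\<^sub>R v) \<le> a * Nrm u + b * Nrm v"
  using Nrm_triangle[of "a *\<^sub>R u" "b *\<^sub>R v"] assms by (simp add: Nrm_scaleR)

lemma norm_halpern_update_diff_le:
  "Nrm (halpern_update x0 n y - halpern_update x0' n y')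
     \<le> 1 / real (n + 1) * Nrm (x0 - x0') + real n / real (n + 1) * Nrm (y - y')"
  unfolding halpern_update_diff by (rule norm_scaleR_add_le) auto

context
  fixes x0 p :: 'a
  assumes fixed: "T p = p"
begin

lemma halpern_seq_dist_fixpoint: "Nrm (halpern_seq T x0 n - p) \<le> Nrm (x0 - p)"
proof (induction n)
  case (Suc n)
  have "Nrm (halpern_seq T x0 (Suc n) - p)
      = Nrm (halpern_update x0 (Suc n) (T (halpern_seq T x0 n)) - halpern_update p (Suc n) (T p))"
    by (simp add: fixed halpern_update_fixed)
  also have "\<dots> \<le> 1 / real (n + 2) * Nrm (x0 - p) + real (Suc n) / real (n + 2) * Nrm (x0 - p)"
  proof -
    have "Nrm (T (halpern_seq T x0 n) - T p) \<le> Nrm (x0 - p)"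
      using nonexpansive Suc order_trans by blast
    then have "real (Suc n) / real (n + 2) * Nrm (T (halpern_seq T x0 n) - T p)
        \<le> real (Suc n) / real (n + 2) * Nrm (x0 - p)"
      by (intro mult_left_mono) auto
    then show ?thesis
      using norm_halpern_update_diff_le[of x0 "Suc n" "T (halpern_seq T x0 n)" p "T p"] by simp
  qed
  also have "\<dots> = Nrm (x0 - p)"
  proof -
    have "1 / real (n + 2) + real (Suc n) / real (n + 2) = 1" by (simp add: field_simps)
    then show ?thesis by (metis distrib_right mult_1)
  qed
  finally show ?case .
qed simp

lemma T_halpern_seq_dist_start: "Nrm (T (halpern_seq T x0 n) - x0) \<le> 2 * Nrm (x0 - p)"
proof -
  have "Nrm (T (halpern_seq T x0 n) - p) \<le> Nrm (x0 - p)"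
    using nonexpansive[of _ p] halpern_seq_dist_fixpoint[of n] fixed by (metis order_trans)
  then show ?thesis
    using Nrm_triangle_diff[of "T (halpern_seq T x0 n)" x0 p] Nrm_minus_commute[of p x0] by simp
qed

lemma halpern_seq_diff_Suc_le:
  "Nrm (halpern_seq T x0 (n + 2) - halpern_seq T x0 (n + 1))
    \<le> real (n + 2) / real (n + 3) * Nrm (halpern_seq T x0 (n + 1) - halpern_seq T x0 n)
      + 1 / (real (n + 2) * real (n + 3)) * (2 * Nrm (x0 - p))"
proof -
  let ?z = "halpern_seq T x0"
  have "?z (n + 2) - ?z (n + 1)
      = (real (n + 2) / real (n + 3)) *\<^sub>R (T (?z (n + 1)) - T (?z n))
        + (1 / (real (n + 2) * real (n + 3))) *\<^sub>R (T (?z n) - x0)"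
    using halpern_update_Suc_diff[of x0 "Suc n" "T (?z (Suc n))" "T (?z n)"] by (simp add: add.commute)
  then have "Nrm (?z (n + 2) - ?z (n + 1))
      \<le> real (n + 2) / real (n + 3) * Nrm (T (?z (n + 1)) - T (?z n))
        + 1 / (real (n + 2) * real (n + 3)) * Nrm (T (?z n) - x0)"
    by (metis norm_scaleR_add_le divide_nonneg_nonneg mult_nonneg_nonneg of_nat_0_le_iff zero_le_one)
  also have "\<dots> \<le> real (n + 2) / real (n + 3) * Nrm (?z (n + 1) - ?z n)
      + 1 / (real (n + 2) * real (n + 3)) * (2 * Nrm (x0 - p))"
    using nonexpansive[of "?z (n + 1)" "?z n"] T_halpern_seq_dist_start[of n]
    by (intro add_mono mult_left_mono) auto
  finally show ?thesis .
qed

lemma halpern_seq_diff: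
  "real (n + 2) * Nrm (halpern_seq T x0 (Suc n) - halpern_seq T x0 n) \<le> 2 * Nrm (x0 - p) * harm (Suc n)"
proof (induction n)
  case 0
  have "halpern_seq T x0 1 - halpern_seq T x0 0 = (1 / 2) *\<^sub>R (T x0 - x0)"
    using halpern_update_Suc_diff[of x0 0 "T x0" "T x0"] by (simp add: halpern_update_0)
  then show ?case using T_halpern_seq_dist_start[of 0] by (simp add: Nrm_scaleR harm_def)
next
  case (Suc n)
  let ?d = "\<lambda>n. Nrm (halpern_seq T x0 (n + 1) - halpern_seq T x0 n)" and ?R = "Nrm (x0 - p)"
  have "real (n + 3) * ?d (n + 1)
      \<le> real (n + 3) * (real (n + 2) / real (n + 3) * ?d n + 1 / (real (n + 2) * real (n + 3)) * (2 * ?R))"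
    using halpern_seq_diff_Suc_le[of n] by (intro mult_left_mono) (simp_all add: add.commute)
  also have "\<dots> = real (n + 2) * ?d n + 2 * ?R / real (n + 2)"
  proof -
    have "b * (a / b * y + 1 / (a * b) * c) = a * y + c / a" if "0 < a" "0 < b" for a b y c :: real
      using that by (simp add: field_simps)
    then show ?thesis by simp
  qed
  also have "\<dots> \<le> 2 * ?R * harm (Suc n) + 2 * ?R / real (n + 2)"
    using Suc by simp
  also have "\<dots> = 2 * ?R * harm (Suc (Suc n))"
    by (simp add: harm_Suc field_simps)
  finally show ?case by (simp add: add.commute)
qed

lemma halpern_seq_residual:
  "Nrm (halpern_seq T x0 n - T (halpern_seq T x0 n)) \<le> 2 * Nrm (x0 - p) * (1 + harm n) / real (n + 1)"
proof (cases n)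
  case 0
  then show ?thesis using T_halpern_seq_dist_start[of 0] Nrm_minus_commute by (simp add: harm_def)
next
  case (Suc m)
  let ?z = "halpern_seq T x0" and ?R = "Nrm (x0 - p)"
  have decomp: "?z (Suc m) - T (?z (Suc m))
      = (1 / real (m + 2)) *\<^sub>R (x0 - T (?z m)) + (T (?z m) - T (?z (Suc m)))"
    using halpern_update_minus[of x0 "Suc m" "T (?z m)" "T (?z (Suc m))"] by simp
  have "Nrm (?z (Suc m) - T (?z (Suc m)))
      \<le> 1 / real (m + 2) * Nrm (x0 - T (?z m)) + Nrm (T (?z m) - T (?z (Suc m)))"
    unfolding decomp by (rule order_trans[OF Nrm_triangle]) (simp add: Nrm_scaleR)
  also have "\<dots> \<le> 1 / real (m + 2) * (2 * ?R) + Nrm (?z (Suc m) - ?z m)"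
    using T_halpern_seq_dist_start[of m] Nrm_minus_commute[of x0] Nrm_minus_commute[of "?z m"]
      nonexpansive[of "?z m" "?z (Suc m)"]
    by (intro add_mono mult_left_mono) auto
  also have "\<dots> \<le> 2 * ?R / real (m + 2) + 2 * ?R * harm (Suc m) / real (m + 2)"
    using halpern_seq_diff[of m] by (simp add: pos_le_divide_eq mult.commute del: halpern_seq.simps)
  finally show ?thesis using Suc by (simp add: add_divide_distrib distrib_left add.commute)
qed

end

end

section \<open>The stochastic Halpern iteration\<close>

lemma halpern_law_Suc:
  "halpern_law D Tt k x0 (Suc n) = bind (halpern_law D Tt k x0 n)
     (\<lambda>x. distr (PiM {..<k (Suc n)} (\<lambda>_. D x)) borel
            (\<lambda>\<xi>. halpern_update x0 (Suc n) (sample_mean (k (Suc n)) (Tt x) \<xi>)))"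
  by (simp add: halpern_update_def sample_mean_def)

locale stochastic_halpern = nonexpansive_map Nrm T
  for Nrm :: "'a::euclidean_space \<Rightarrow> real" and T :: "'a \<Rightarrow> 'a" +
  fixes \<Xi> :: "'b measure" and D :: "'a \<Rightarrow> 'b measure" and Tt :: "'a \<Rightarrow> 'b \<Rightarrow> 'a" and \<sigma> :: real
  assumes D_kernel: "D \<in> borel \<rightarrow>\<^sub>M prob_algebra \<Xi>"
    and Tt_measurable: "(\<lambda>(x, \<xi>). Tt x \<xi>) \<in> borel \<Otimes>\<^sub>M \<Xi> \<rightarrow>\<^sub>M borel"
    and integrable_Tt: "\<And>x. integrable (D x) (Tt x)"
    and unbiased: "\<And>x. (\<integral>\<xi>. Tt x \<xi> \<partial>D x) = T x"
    and integrable_variance: "\<And>x. integrable (D x) (\<lambda>\<xi>. (norm (Tt x \<xi> - T x))\<^sup>2)"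
    and variance_bound: "\<And>x. (\<integral>\<xi>. (norm (Tt x \<xi> - T x))\<^sup>2 \<partial>D x) \<le> \<sigma>\<^sup>2"
begin

lemma measurable_Nrm[measurable]: "Nrm \<in> borel_measurable borel"
  by (rule borel_measurable_is_norm[OF is_norm])

lemma prob_space_D: "prob_space (D x)" and sets_D: "sets (D x) = sets \<Xi>"
  using measurable_space[OF D_kernel, of x] by (auto simp: space_prob_algebra)

lemma measurable_sample_mean:
  "(\<lambda>(x, \<xi>). sample_mean m (Tt x) \<xi>) \<in> borel \<Otimes>\<^sub>M PiM {..<m} (\<lambda>_. \<Xi>) \<rightarrow>\<^sub>M borel"
proof -
  have "(\<lambda>(x, \<xi>). Tt x (\<xi> j)) \<in> borel \<Otimes>\<^sub>M PiM {..<m} (\<lambda>_. \<Xi>) \<rightarrow>\<^sub>M borel" if "j < m" for j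
  proof -
    have "(\<lambda>(x, \<xi>). (x, \<xi> j)) \<in> borel \<Otimes>\<^sub>M PiM {..<m} (\<lambda>_. \<Xi>) \<rightarrow>\<^sub>M borel \<Otimes>\<^sub>M \<Xi>"
      by measurable (simp add: that)
    from measurable_compose[OF this Tt_measurable] show ?thesis by (simp add: case_prod_beta)
  qed
  then show ?thesis
    unfolding sample_mean_def case_prod_beta
    by (intro borel_measurable_scaleR borel_measurable_const borel_measurable_sum) (simp add: case_prod_beta)+
qed

lemma measurable_sample_mean_fixed:
  "sample_mean m (Tt x) \<in> PiM {..<m} (\<lambda>_. D x) \<rightarrow>\<^sub>M borel"
proof -
  have "sets (PiM {..<m} (\<lambda>_. D x)) = sets (PiM {..<m} (\<lambda>_. \<Xi>))"
    by (intro sets_PiM_cong) (auto simp: sets_D)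
  then show ?thesis
    using measurable_Pair2[OF measurable_sample_mean, of x] by (simp cong: measurable_cong_sets)
qed

lemma measurable_halpern_kernel:
  "(\<lambda>x. distr (PiM {..<m} (\<lambda>_. D x)) borel (\<lambda>\<xi>. halpern_update x0 n (sample_mean m (Tt x) \<xi>)))
     \<in> borel \<rightarrow>\<^sub>M prob_algebra borel"
proof (rule measurable_distr_prob_space2[OF measurable_PiM_prob_kernel[OF D_kernel finite_lessThan]])
  show "(\<lambda>(x, \<xi>). halpern_update x0 n (sample_mean m (Tt x) \<xi>)) \<in> borel \<Otimes>\<^sub>M PiM {..<m} (\<lambda>_. \<Xi>) \<rightarrow>\<^sub>M borel"
    using measurable_sample_mean unfolding halpern_update_def case_prod_beta
    by (intro borel_measurable_add borel_measurable_scaleR borel_measurable_const) simp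
qed

lemma halpern_law_prob_algebra: "halpern_law D Tt k x0 n \<in> space (prob_algebra borel)"
proof (induction n)
  case 0
  then show ?case using measurable_space[OF measurable_return_prob_space, of x0 borel] by simp
next
  case (Suc n)
  have "(\<lambda>_. halpern_law D Tt k x0 (Suc n)) \<in> (borel :: 'a measure) \<rightarrow>\<^sub>M prob_algebra borel"
    unfolding halpern_law_Suc
    by (rule measurable_bind_prob_space[OF measurable_const[OF Suc.IH] measurable_halpern_kernel])
  from measurable_space[OF this, of x0] show ?case by simp
qed

lemma prob_space_halpern_law: "prob_space (halpern_law D Tt k x0 n)"
  and sets_halpern_law: "sets (halpern_law D Tt k x0 n) = sets borel"
  using halpern_law_prob_algebra[of k x0 n] by (auto simp: space_prob_algebra)

lemma nn_integral_halpern_law_Suc: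
  assumes f: "f \<in> borel_measurable borel"
  shows "(\<integral>\<^sup>+y. f y \<partial>halpern_law D Tt k x0 (Suc n))
    = (\<integral>\<^sup>+x. (\<integral>\<^sup>+\<xi>. f (halpern_update x0 (Suc n) (sample_mean (k (Suc n)) (Tt x) \<xi>))
          \<partial>PiM {..<k (Suc n)} (\<lambda>_. D x)) \<partial>halpern_law D Tt k x0 n)"
proof -
  have "(\<lambda>x. distr (PiM {..<k (Suc n)} (\<lambda>_. D x)) borel (\<lambda>\<xi>. halpern_update x0 (Suc n) (sample_mean (k (Suc n)) (Tt x) \<xi>)))
      \<in> halpern_law D Tt k x0 n \<rightarrow>\<^sub>M subprob_algebra borel"
    unfolding measurable_cong_sets[OF sets_halpern_law refl]
    by (rule measurable_prob_algebraD[OF measurable_halpern_kernel])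
  moreover have "(\<lambda>\<xi>. halpern_update x0 (Suc n) (sample_mean (k (Suc n)) (Tt x) \<xi>))
      \<in> PiM {..<k (Suc n)} (\<lambda>_. D x) \<rightarrow>\<^sub>M borel" for x
    using measurable_sample_mean_fixed unfolding halpern_update_def
    by (intro borel_measurable_add borel_measurable_scaleR borel_measurable_const)
  ultimately show ?thesis
    unfolding halpern_law_Suc using f
    by (simp add: nn_integral_bind[OF f] nn_integral_distr)
qed

text \<open>\<open>\<bar>\<sigma>\<bar> + 1\<close> rather than \<open>\<bar>\<sigma>\<bar>\<close> keeps the scale positive, as the second-moment bound requires.\<close>

definition noise_scale :: real where
  "noise_scale = (\<Sum>b\<in>Basis. Nrm b) * (\<bar>\<sigma>\<bar> + 1)"

lemma noise_scale_pos: "0 < noise_scale"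
  using is_norm_Basis_sum_pos[OF is_norm] by (simp add: noise_scale_def)

lemma nn_integral_sample_mean_error:
  assumes m: "0 < m"
  shows "(\<integral>\<^sup>+\<xi>. ennreal (Nrm (sample_mean m (Tt x) \<xi> - T x)) \<partial>PiM {..<m} (\<lambda>_. D x))
    \<le> ennreal (noise_scale / sqrt (real m))"
proof -
  let ?P = "PiM {..<m} (\<lambda>_. D x)" and ?e = "\<lambda>\<xi>. norm (sample_mean m (Tt x) \<xi> - T x)"
  define c where "c = (\<Sum>b\<in>Basis. Nrm b)"
  have c: "0 < c" unfolding c_def by (rule is_norm_Basis_sum_pos[OF is_norm])
  have P: "prob_space ?P" by (intro prob_space_PiM prob_space_D)
  note mse = sample_mean_sq_error[OF prob_space_D integrable_Tt _ m, unfolded unbiased, OF integrable_variance]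
  have "(\<integral>\<xi>. (c * ?e \<xi>)\<^sup>2 \<partial>?P) = c\<^sup>2 * ((\<integral>\<xi>. (norm (Tt x \<xi> - T x))\<^sup>2 \<partial>D x) / real m)"
    using mse by (simp add: power_mult_distrib)
  also have "\<dots> \<le> c\<^sup>2 * ((\<bar>\<sigma>\<bar> + 1)\<^sup>2 / real m)"
    using variance_bound[of x] m
    by (intro mult_left_mono divide_right_mono order_trans[OF _ power_mono[of "\<bar>\<sigma>\<bar>" "\<bar>\<sigma>\<bar> + 1"]]) auto
  also have "\<dots> = (noise_scale / sqrt (real m))\<^sup>2"
    using m by (simp add: noise_scale_def c_def power_divide power_mult_distrib)
  finally have "(\<integral>\<^sup>+\<xi>. ennreal \<bar>c * ?e \<xi>\<bar> \<partial>?P) \<le> ennreal (noise_scale / sqrt (real m))"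
    using mse m noise_scale_pos
    by (intro nn_integral_le_of_second_moment[OF P]) (auto simp: power_mult_distrib)
  moreover have "Nrm (sample_mean m (Tt x) \<xi> - T x) \<le> \<bar>c * ?e \<xi>\<bar>" for \<xi>
    using is_norm_le_norm[OF is_norm] c by (simp add: c_def)
  then have "(\<integral>\<^sup>+\<xi>. ennreal (Nrm (sample_mean m (Tt x) \<xi> - T x)) \<partial>?P) \<le> (\<integral>\<^sup>+\<xi>. ennreal \<bar>c * ?e \<xi>\<bar> \<partial>?P)"
    by (intro nn_integral_mono ennreal_leI)
  ultimately show ?thesis by (rule order_trans[rotated])
qed

lemma nn_integral_halpern_step_error:
  assumes m: "0 < k (Suc n)"
  shows "(\<integral>\<^sup>+\<xi>. ennreal (Nrm (halpern_update x0 (Suc n) (sample_mean (k (Suc n)) (Tt x) \<xi>)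
              - halpern_update x0 (Suc n) (T z))) \<partial>PiM {..<k (Suc n)} (\<lambda>_. D x))
    \<le> ennreal (real (Suc n) / real (n + 2) * Nrm (x - z)
        + real (Suc n) / real (n + 2) * (noise_scale / sqrt (real (k (Suc n)))))"
proof -
  let ?m = "k (Suc n)" and ?\<beta> = "real (Suc n) / real (n + 2)"
  let ?err = "\<lambda>\<xi>. Nrm (sample_mean ?m (Tt x) \<xi> - T x)"
  have "Nrm (halpern_update x0 (Suc n) (sample_mean ?m (Tt x) \<xi>) - halpern_update x0 (Suc n) (T z))
      \<le> ?\<beta> * ?err \<xi> + ?\<beta> * Nrm (x - z)" for \<xi>
  proof -
    have "Nrm (halpern_update x0 (Suc n) (sample_mean ?m (Tt x) \<xi>) - halpern_update x0 (Suc n) (T z))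
        = ?\<beta> * Nrm (sample_mean ?m (Tt x) \<xi> - T z)"
      by (simp add: halpern_update_diff Nrm_scaleR add.commute)
    also have "\<dots> \<le> ?\<beta> * (?err \<xi> + Nrm (T x - T z))"
      by (intro mult_left_mono Nrm_triangle_diff) auto
    also have "\<dots> \<le> ?\<beta> * (?err \<xi> + Nrm (x - z))"
      by (intro mult_left_mono add_left_mono nonexpansive) auto
    finally show ?thesis by (simp add: distrib_left)
  qed
  then have "(\<integral>\<^sup>+\<xi>. ennreal (Nrm (halpern_update x0 (Suc n) (sample_mean ?m (Tt x) \<xi>)
              - halpern_update x0 (Suc n) (T z))) \<partial>PiM {..<?m} (\<lambda>_. D x))
      \<le> (\<integral>\<^sup>+\<xi>. ennreal (?\<beta> * ?err \<xi> + ?\<beta> * Nrm (x - z)) \<partial>PiM {..<?m} (\<lambda>_. D x))"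
    by (intro nn_integral_mono ennreal_leI)
  also have "\<dots> \<le> ennreal (?\<beta> * (noise_scale / sqrt (real ?m)) + ?\<beta> * Nrm (x - z))"
    using measurable_sample_mean_fixed nn_integral_sample_mean_error[OF m] noise_scale_pos Nrm_nonneg
    by (intro nn_integral_affine_le prob_space_PiM prob_space_D) auto
  finally show ?thesis by (simp add: add.commute)
qed

lemma halpern_law_tracking:
  assumes k: "\<And>n. 0 < k (Suc n)"
  shows "(\<integral>\<^sup>+y. ennreal (Nrm (y - halpern_seq T x0 n)) \<partial>halpern_law D Tt k x0 n)
    \<le> ennreal (noise_scale * (\<Sum>j=1..n. real j / sqrt (real (k j))) / real (n + 1))"
proof (induction n)
  case 0
  have "(\<integral>\<^sup>+y. ennreal (Nrm (y - x0)) \<partial>return borel x0) = 0"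
    using is_norm_eq_0_iff[OF is_norm, of 0] by (subst nn_integral_return) auto
  then show ?case by simp
next
  case (Suc n)
  let ?H = "halpern_law D Tt k x0 n" and ?z = "halpern_seq T x0 n"
  let ?\<beta> = "real (Suc n) / real (n + 2)" and ?S = "\<lambda>n. \<Sum>j=1..n. real j / sqrt (real (k j))"
  have S: "0 \<le> noise_scale * ?S n / real (n + 1)"
    using noise_scale_pos by (intro divide_nonneg_nonneg mult_nonneg_nonneg sum_nonneg) auto
  have "(\<integral>\<^sup>+y. ennreal (Nrm (y - halpern_seq T x0 (Suc n))) \<partial>halpern_law D Tt k x0 (Suc n))
      = (\<integral>\<^sup>+x. (\<integral>\<^sup>+\<xi>. ennreal (Nrm (halpern_update x0 (Suc n) (sample_mean (k (Suc n)) (Tt x) \<xi>)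
              - halpern_update x0 (Suc n) (T ?z))) \<partial>PiM {..<k (Suc n)} (\<lambda>_. D x)) \<partial>?H)"
    using nn_integral_halpern_law_Suc[of "\<lambda>y. ennreal (Nrm (y - halpern_seq T x0 (Suc n)))" k x0 n]
    by simp
  also have "\<dots> \<le> (\<integral>\<^sup>+x. ennreal (?\<beta> * Nrm (x - ?z) + ?\<beta> * (noise_scale / sqrt (real (k (Suc n))))) \<partial>?H)"
    by (intro nn_integral_mono nn_integral_halpern_step_error k)
  also have "\<dots> \<le> ennreal (?\<beta> * (noise_scale * ?S n / real (Suc n)) + ?\<beta> * (noise_scale / sqrt (real (k (Suc n)))))"
    using Suc S noise_scale_pos by (intro nn_integral_affine_le prob_space_halpern_law)
      (auto simp: measurable_cong_sets[OF sets_halpern_law refl] Nrm_nonneg)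
  also have "?\<beta> * (noise_scale * ?S n / real (Suc n)) + ?\<beta> * (noise_scale / sqrt (real (k (Suc n))))
      = noise_scale * (?S n + real (Suc n) / sqrt (real (k (Suc n)))) / real (n + 2)"
  proof -
    have alg: "a / b * (c * S / a) + a / b * (c / q) = c * (S + a / q) / b"
      if "0 < a" "0 < b" "0 < q" for a b c S q :: real
      using that by (simp add: field_simps)
    show ?thesis using k[of n] by (intro alg) auto
  qed
  also have "\<dots> = noise_scale * ?S (Suc n) / real (Suc n + 1)"
    by (simp add: sum.cl_ivl_Suc add.commute)
  finally show ?case .
qed

lemma halpern_law_residual:
  assumes k: "\<And>n. 0 < k (Suc n)" and fixed: "T p = p"
  shows "(\<integral>\<^sup>+y. ennreal (Nrm (y - T y)) \<partial>halpern_law D Tt k x0 n)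
    \<le> ennreal ((2 * noise_scale * (\<Sum>j=1..n. real j / sqrt (real (k j))) + 2 * Nrm (x0 - p) * (1 + harm n))
                / real (n + 1))"
proof -
  let ?H = "halpern_law D Tt k x0 n" and ?z = "halpern_seq T x0 n"
  let ?S = "\<Sum>j=1..n. real j / sqrt (real (k j))"
  have S: "0 \<le> noise_scale * ?S / real (n + 1)"
    using noise_scale_pos by (intro divide_nonneg_nonneg mult_nonneg_nonneg sum_nonneg) auto
  have "Nrm (y - T y) \<le> 2 * Nrm (y - ?z) + Nrm (?z - T ?z)" for y
    using Nrm_triangle_diff[of y "T y" ?z] Nrm_triangle_diff[of ?z "T y" "T ?z"] nonexpansive[of ?z y]
      Nrm_minus_commute[of ?z y] by simp
  then have "(\<integral>\<^sup>+y. ennreal (Nrm (y - T y)) \<partial>?H) \<le> (\<integral>\<^sup>+y. ennreal (2 * Nrm (y - ?z) + Nrm (?z - T ?z)) \<partial>?H)"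
    by (intro nn_integral_mono ennreal_leI)
  also have "\<dots> \<le> ennreal (2 * (noise_scale * ?S / real (n + 1)) + Nrm (?z - T ?z))"
    using halpern_law_tracking[of k, OF k] S
    by (intro nn_integral_affine_le prob_space_halpern_law)
      (auto simp: measurable_cong_sets[OF sets_halpern_law refl] Nrm_nonneg)
  also have "\<dots> \<le> ennreal ((2 * noise_scale * ?S + 2 * Nrm (x0 - p) * (1 + harm n)) / real (n + 1))"
    using halpern_seq_residual[OF fixed, of x0 n] by (intro ennreal_leI) (simp add: add_divide_distrib)
  finally show ?thesis .
qed

end

section \<open>Oracle complexity\<close>

lemma harm_le_ln_plus_one: "1 \<le> n \<Longrightarrow> harm n \<le> ln (real n) + (1::real)"
  using euler_mascheroni_sequence_decreasing[of 1 n] by (simp add: harm_def)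

lemma ln_nat_ceiling_le:
  assumes "1 \<le> x"
  shows "ln (real (nat \<lceil>x\<rceil>)) \<le> ln x + 1"
proof -
  have "ln (real (nat \<lceil>x\<rceil>)) \<le> ln (2 * x)"
    using assms by (intro ln_mono) linarith+
  also have "\<dots> \<le> ln x + 1"
    using assms ln_le_minus_one[of 2] by (simp add: ln_mult)
  finally show ?thesis .
qed

lemma harmonic_rate_at_ceiling:
  fixes K \<epsilon> :: real
  assumes K: "0 < K" and \<epsilon>: "0 < \<epsilon>" "\<epsilon> < K"
  defines "A \<equiv> (2 * K + 4)\<^sup>2" and "L \<equiv> 1 + \<bar>ln \<epsilon>\<bar>"
  defines "N \<equiv> nat \<lceil>A * L / \<epsilon>\<rceil>"
  shows "K * (1 + harm N) / real (N + 1) \<le> \<epsilon>" and "real N \<le> (A + K) * L / \<epsilon>"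
proof -
  \<comment> \<open>\<open>A\<close> is chosen so that \<open>K (4 + ln A) \<le> A\<close>, which absorbs the logarithm of \<open>N\<close>\<close>
  have L: "1 \<le> L" by (simp add: L_def)
  have "1 * (2 * K + 4) \<le> (2 * K + 4) * (2 * K + 4)" "4 * 4 \<le> (2 * K + 4) * (2 * K + 4)"
    using K by (intro mult_mono; simp)+
  moreover have "A = (2 * K + 4) * (2 * K + 4)" by (simp add: A_def power2_eq_square)
  ultimately have A: "16 \<le> A" "K \<le> A"
    using K by (smt (verit))+
  have "\<epsilon> \<le> K * L"
    using \<epsilon> K L mult_le_cancel_left1[of K L] by linarith
  moreover have "K * L \<le> A * L" using A L by (intro mult_right_mono) auto
  ultimately have x: "1 \<le> A * L / \<epsilon>" and KL: "1 \<le> K * L / \<epsilon>"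
    using \<epsilon> by (simp_all add: field_simps)
  have N: "A * L / \<epsilon> \<le> real N" "real N \<le> A * L / \<epsilon> + 1" "1 \<le> N"
    using x unfolding N_def by linarith+
  then show "real N \<le> (A + K) * L / \<epsilon>"
    using KL by (simp add: distrib_right add_divide_distrib)
  have "ln (real N) \<le> ln A + ln L - ln \<epsilon> + 1"
    using ln_nat_ceiling_le[OF x] \<epsilon> A L by (simp add: N_def ln_mult ln_div)
  moreover have "ln L \<le> L - 1" "- ln \<epsilon> \<le> L - 1"
    using L ln_le_minus_one[of L] by (auto simp: L_def)
  ultimately have lnN: "ln (real N) \<le> ln A + 2 * L" by linarith
  have lnA: "0 \<le> ln A" "ln A \<le> 2 * (2 * K + 4) - 2"
    using A ln_le_minus_one[of "2 * K + 4"] K by (simp_all add: A_def ln_realpow)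
  have "K * (4 + ln A) \<le> K * (10 + 4 * K)"
    using lnA K by (intro mult_left_mono) auto
  also have "\<dots> \<le> A"
    using K by (simp add: A_def power2_eq_square algebra_simps)
  finally have KA: "K * (4 + ln A) \<le> A" .
  have "ln A * 1 \<le> ln A * L"
    using lnA L by (intro mult_left_mono) auto
  then have "2 + ln A + 2 * L \<le> (4 + ln A) * L"
    using L by (simp add: distrib_right)
  have "K * (1 + harm N) \<le> K * (2 + ln A + 2 * L)"
    using harm_le_ln_plus_one[OF N(3)] lnN K by (intro mult_left_mono) auto
  also have "\<dots> \<le> K * (4 + ln A) * L"
    using \<open>2 + ln A + 2 * L \<le> (4 + ln A) * L\<close> K by (simp add: mult.assoc)
  also have "\<dots> \<le> A * L"
    using KA L by (intro mult_right_mono) auto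
  also have "\<dots> \<le> \<epsilon> * real N"
    using N(1) \<epsilon> by (simp add: pos_divide_le_eq mult.commute)
  also have "\<dots> \<le> \<epsilon> * real (N + 1)"
    using \<epsilon> by simp
  finally show "K * (1 + harm N) / real (N + 1) \<le> \<epsilon>"
    by (simp add: divide_le_eq)
qed

lemma harmonic_rate_inverse:
  fixes K :: real
  assumes K: "0 < K"
  shows "\<exists>C. \<forall>\<epsilon>>0. \<exists>N.
    K * (1 + harm N) / real (N + 1) \<le> \<epsilon> \<and> real N \<le> C * (1 / \<epsilon>) * (1 + \<bar>ln \<epsilon>\<bar>)"
proof (intro exI[of _ "(2 * K + 4)\<^sup>2 + K"] allI impI)
  fix \<epsilon> :: real assume \<epsilon>: "0 < \<epsilon>"
  let ?C = "(2 * K + 4)\<^sup>2 + K"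
  show "\<exists>N. K * (1 + harm N) / real (N + 1) \<le> \<epsilon> \<and> real N \<le> ?C * (1 / \<epsilon>) * (1 + \<bar>ln \<epsilon>\<bar>)"
  proof (cases "K \<le> \<epsilon>")
    case True
    then have "K * (1 + harm 0) / real (0 + 1) \<le> \<epsilon> \<and> real 0 \<le> ?C * (1 / \<epsilon>) * (1 + \<bar>ln \<epsilon>\<bar>)"
      using K \<epsilon> by (simp add: harm_def)
    then show ?thesis ..
  next
    case False
    then show ?thesis
      using harmonic_rate_at_ceiling[OF K \<epsilon>] by (auto simp: mult.commute mult.left_commute)
  qed
qed

lemma real_sum_power_le:
  assumes "real n \<le> x"
  shows "real (\<Sum>i=1..n. i ^ k) \<le> x ^ Suc k"
proof -
  have "(\<Sum>i=1..n. i ^ k) \<le> (\<Sum>i=1..n. n ^ k)"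
    by (intro sum_mono power_mono) auto
  then have "(\<Sum>i=1..n. i ^ k) \<le> n ^ Suc k" by simp
  then have "real (\<Sum>i=1..n. i ^ k) \<le> real n ^ Suc k"
    unfolding of_nat_power[symmetric] of_nat_le_iff .
  also have "\<dots> \<le> x ^ Suc k"
    using assms by (intro power_mono) auto
  finally show ?thesis .
qed

context stochastic_halpern
begin

lemma halpern_law_pow4_rate:
  assumes fixed: "T p = p"
  shows "(\<integral>\<^sup>+y. ennreal (Nrm (y - T y)) \<partial>halpern_law D Tt (\<lambda>n. n ^ 4) x0 n)
    \<le> ennreal ((2 * noise_scale + 2 * Nrm (x0 - p)) * (1 + harm n) / real (n + 1))"
proof -
  have "sqrt (real (j ^ 4)) = real j ^ 2" for j :: nat
    by (rule real_sqrt_unique) (simp_all flip: power_mult)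
  then have "(\<Sum>j=1..n. real j / sqrt (real (j ^ 4))) = harm n"
    unfolding harm_def by (intro sum.cong) (auto simp: power2_eq_square field_simps)
  moreover have "2 * noise_scale * harm n \<le> 2 * noise_scale * (1 + harm n)"
    using noise_scale_pos by simp
  ultimately show ?thesis
    using halpern_law_residual[of "\<lambda>n. n ^ 4", OF _ fixed, of x0 n]
    by (simp add: divide_right_mono distrib_right order_trans[OF _ ennreal_leI])
qed

lemma halpern_law_pow4_iterations:
  assumes fixed: "T p = p"
  shows "\<exists>C. \<forall>\<epsilon>>0. \<exists>N.
    (\<integral>\<^sup>+y. ennreal (Nrm (y - T y)) \<partial>halpern_law D Tt (\<lambda>n. n ^ 4) x0 N) \<le> ennreal \<epsilon>
    \<and> real N \<le> C * (1 / \<epsilon>) * (1 + \<bar>ln \<epsilon>\<bar>)"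
proof -
  have "0 < 2 * noise_scale + 2 * Nrm (x0 - p)"
    using noise_scale_pos Nrm_nonneg[of "x0 - p"] by simp
  then obtain C where C: "\<forall>\<epsilon>>0. \<exists>N. (2 * noise_scale + 2 * Nrm (x0 - p)) * (1 + harm N) / real (N + 1) \<le> \<epsilon>
      \<and> real N \<le> C * (1 / \<epsilon>) * (1 + \<bar>ln \<epsilon>\<bar>)"
    using harmonic_rate_inverse by blast
  show ?thesis
    using halpern_law_pow4_rate[OF fixed, of x0] C by (meson ennreal_leI order_trans)
qed

end

theorem corollary1:
  fixes Nrm :: "'a::euclidean_space \<Rightarrow> real"
    and T :: "'a \<Rightarrow> 'a"
    and \<Xi> :: "'b measure"
    and D :: "'a \<Rightarrow> 'b measure"
    and Tt :: "'a \<Rightarrow> 'b \<Rightarrow> 'a"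
    and \<sigma> :: real
    and x0 :: 'a
  assumes "is_norm Nrm"
    and "\<forall>x y. Nrm (T x - T y) \<le> Nrm (x - y)"
    and "\<exists>x. T x = x"
    and "D \<in> borel \<rightarrow>\<^sub>M prob_algebra \<Xi>"
    and "(\<lambda>(x, \<xi>). Tt x \<xi>) \<in> borel \<Otimes>\<^sub>M \<Xi> \<rightarrow>\<^sub>M borel"
    and "\<forall>x. integrable (D x) (Tt x) \<and> (\<integral>\<xi>. Tt x \<xi> \<partial>D x) = T x"
    and "\<forall>x. integrable (D x) (\<lambda>\<xi>. (norm (Tt x \<xi> - T x))\<^sup>2) \<and>
             (\<integral>\<xi>. (norm (Tt x \<xi> - T x))\<^sup>2 \<partial>D x) \<le> \<sigma>\<^sup>2"
  shows "\<exists>(C::real) (m::nat). \<forall>\<epsilon>>0. \<exists>N::nat.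
           (\<integral>\<^sup>+ y. ennreal (Nrm (y - T y)) \<partial>halpern_law D Tt (\<lambda>n. n ^ 4) x0 N) \<le> ennreal \<epsilon>
         \<and> real (\<Sum>n=1..N. n ^ 4) \<le> C * (1 / \<epsilon>) ^ 5 * (1 + \<bar>ln \<epsilon>\<bar>) ^ m"
proof -
  interpret stochastic_halpern Nrm T \<Xi> D Tt \<sigma>
    using assms(1,2,4-7) by unfold_locales auto
  obtain p where "T p = p" using assms(3) by blast
  then obtain C where C: "\<forall>\<epsilon>>0. \<exists>N.
      (\<integral>\<^sup>+y. ennreal (Nrm (y - T y)) \<partial>halpern_law D Tt (\<lambda>n. n ^ 4) x0 N) \<le> ennreal \<epsilon>
      \<and> real N \<le> C * (1 / \<epsilon>) * (1 + \<bar>ln \<epsilon>\<bar>)"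
    using halpern_law_pow4_iterations by blast
  have "real (\<Sum>n=1..N. n ^ 4) \<le> C ^ 5 * (1 / \<epsilon>) ^ 5 * (1 + \<bar>ln \<epsilon>\<bar>) ^ 5"
    if "real N \<le> C * (1 / \<epsilon>) * (1 + \<bar>ln \<epsilon>\<bar>)" for N \<epsilon>
    using real_sum_power_le[OF that, of 4, unfolded power_mult_distrib] by simp
  then show ?thesis
    using C by (intro exI[of _ "C ^ 5"] exI[of _ 5]) blast
qed

end
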